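(* Let $d_h,d_b\ge1$ and $d=2d_h+d_b+2$. There exists a single-layer Transformer encoder (with linear maps $Q,K,V:\mathbb{Q}^d\to\mathbb{Q}^d$, an FFN $O$, residual connections, and final linear maps $K^{(1)},V^{(1)}$) such that for every $n\ge1$ and every $s_1,\dots,s_n\in\mathbb{Q}^{d_b}$, on input the sequence $x_i=[0_{d_h},s_i,0_{d_h},i,1]$, $i=1,\dots,n$, it outputs $(K^e,V^e)$ with $K^e=(k_1,\dots,k_n)$, $V^e=(v_1,\dots,v_n)$, where $k_i=[0_{d_h},0_{d_b},0_{d_h},-1,i]$ and $v_i=[0_{d_h},s_i,0_{d_h},0,0]$.
   Context: Vectors in $\mathbb{Q}^d$ are written as concatenations of blocks, $[\cdot,\cdot,\dots]$; $0_k$ is the zero vector of length $k$. A single-layer encoder with parameters $Q,K,V,O$ maps $(x_1,\dots,x_n)$ to $z_i=O(a_i)+a_i$ where $a_i=\mathrm{Att}(Q(x_i),K(X),V(X))+x_i$, and $\mathrm{Att}(q,K,V)=\sum_i\alpha_iv_i$ with $(\alpha_i)=\mathrm{hardmax}(f^{att}(q,k_1),\dots,f^{att}(q,k_n))$ ($\mathrm{hardmax}$ puts equal weight $1/r$ on the $r$ maximizing coordinates, $0$ elsewhere) for a scoring function $f^{att}$ (e.g. $-|\langle q,k\rangle|$). The FFN $O$ uses the saturated linear activation $\sigma(x)=\min(1,\max(0,x))$. The encoder outputs $K^e=K^{(1)}(Z)$, $V^e=V^{(1)}(Z)$ applied coordinatewise to $Z=(z_1,\dots,z_n)$. *)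

theory Defs
  imports "Jordan_Normal_Form.Matrix"
begin

definition sat :: "rat \<Rightarrow> rat" where
  "sat x = min 1 (max 0 x)"

definition score :: "rat vec \<Rightarrow> rat vec \<Rightarrow> rat" where
  "score q k = - \<bar>q \<bullet> k\<bar>"

definition hardmax :: "rat list \<Rightarrow> rat list" where
  "hardmax xs = (let m = Max (set xs); r = length (filter (\<lambda>x. x = m) xs)
                 in map (\<lambda>x. if x = m then 1 / of_nat r else 0) xs)"

definition att :: "nat \<Rightarrow> rat vec \<Rightarrow> rat vec list \<Rightarrow> rat vec list \<Rightarrow> rat vec" where
  "att d q ks vs = (let \<alpha> = hardmax (map (score q) ks)
                    in vec d (\<lambda>j. \<Sum>i<length vs. (\<alpha> ! i) * (vs ! i $ j)))"

definition ffn :: "rat mat \<Rightarrow> rat vec \<Rightarrow> rat mat \<Rightarrow> rat vec \<Rightarrow> rat vec \<Rightarrow> rat vec" where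
  "ffn W1 b1 W2 b2 x = W2 *\<^sub>v map_vec sat (W1 *\<^sub>v x + b1) + b2"

definition enc_layer :: "nat \<Rightarrow> rat mat \<Rightarrow> rat mat \<Rightarrow> rat mat \<Rightarrow> (rat vec \<Rightarrow> rat vec)
    \<Rightarrow> rat vec list \<Rightarrow> rat vec list" where
  "enc_layer d Q K V F xs =
     map (\<lambda>x. let a = att d (Q *\<^sub>v x) (map (\<lambda>y. K *\<^sub>v y) xs) (map (\<lambda>y. V *\<^sub>v y) xs) + x
              in F a + a) xs"

definition zvec :: "nat \<Rightarrow> rat vec" where
  "zvec k = 0\<^sub>v k"

definition inp :: "nat \<Rightarrow> rat vec \<Rightarrow> nat \<Rightarrow> rat vec" where
  "inp dh s i = zvec dh @\<^sub>v s @\<^sub>v zvec dh @\<^sub>v vec_of_list [of_nat i, 1]"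

definition key_out :: "nat \<Rightarrow> nat \<Rightarrow> nat \<Rightarrow> rat vec" where
  "key_out dh db i = zvec dh @\<^sub>v zvec db @\<^sub>v zvec dh @\<^sub>v vec_of_list [-1, of_nat i]"

definition val_out :: "nat \<Rightarrow> rat vec \<Rightarrow> rat vec" where
  "val_out dh s = zvec dh @\<^sub>v s @\<^sub>v zvec dh @\<^sub>v vec_of_list [0, 0]"

end

theory Submission
  imports Defs
begin

text \<open>Both targets are linear in the input: \<open>k\<^sub>i\<close> is read off the last two coordinates
  \<open>[i, 1]\<close> and \<open>v\<^sub>i\<close> is a coordinate projection. So the encoder layer can be taken to be the
  identity -- a zero value matrix makes every attention output vanish whatever the hardmax
  weights are, and an FFN with zero output weights contributes nothing -- and the final maps
  \<open>K1\<close>, \<open>V1\<close> do all the work.\<close>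

lemma vec_of_list_pair_index: "j < 2 \<Longrightarrow> vec_of_list [a, b] $ j = (if j = 0 then a else b)"
  by (auto simp del: vec_of_list_Cons simp: vec_of_list_index nth_Cons')

definition select_mat :: "nat \<Rightarrow> (nat \<Rightarrow> nat) \<Rightarrow> (nat \<Rightarrow> 'a) \<Rightarrow> 'a :: semiring_0 mat" where
  "select_mat d \<pi> c = mat d d (\<lambda>(j, k). if k = \<pi> j then c j else 0)"

lemma select_mat_carrier: "select_mat d \<pi> c \<in> carrier_mat d d"
  by (simp add: select_mat_def)

lemma select_mat_mult_vec_index:
  assumes "x \<in> carrier_vec d" and "j < d" and "\<pi> j < d"
  shows "(select_mat d \<pi> c *\<^sub>v x) $ j = c j * x $ \<pi> j"
proof -
  have "(select_mat d \<pi> c *\<^sub>v x) $ j = (\<Sum>k<d. (if k = \<pi> j then c j else 0) * x $ k)"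
    using assms by (simp add: select_mat_def scalar_prod_def lessThan_atLeast0)
  also have "\<dots> = c j * x $ \<pi> j"
    using assms(3) by (simp add: if_distrib[where f = "\<lambda>a. a * _"] cong: if_cong)
  finally show ?thesis .
qed

lemma att_zero_values:
  assumes "\<forall>v \<in> set vs. v = 0\<^sub>v d"
  shows "att d q ks vs = 0\<^sub>v d"
proof -
  have "vs ! k $ j = 0" if "k < length vs" and "j < d" for k j
    using assms nth_mem[OF that(1)] that(2) by auto
  then show ?thesis
    unfolding att_def Let_def by (intro eq_vecI) auto
qed

lemma ffn_zero_output: "b1 \<in> carrier_vec m \<Longrightarrow> ffn W1 b1 (0\<^sub>m d m) (0\<^sub>v d) x = 0\<^sub>v d"
  unfolding ffn_def by (rule eq_vecI) (auto simp: scalar_prod_def)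

lemma enc_layer_zero_values:
  assumes "\<And>a. F a = 0\<^sub>v d" and "\<forall>x \<in> set xs. x \<in> carrier_vec d"
  shows "enc_layer d Q K (0\<^sub>m d d) F xs = xs"
proof -
  have "att d q ks (map (\<lambda>y. 0\<^sub>m d d *\<^sub>v y) xs) = 0\<^sub>v d" for q ks
    using assms(2) by (intro att_zero_values) auto
  then show ?thesis
    unfolding enc_layer_def Let_def assms(1) using assms(2) by (auto intro!: map_idI)
qed

lemma inp_carrier: "s \<in> carrier_vec db \<Longrightarrow> inp dh s i \<in> carrier_vec (2 * dh + db + 2)"
  unfolding inp_def zvec_def by (auto simp del: vec_of_list_Cons intro!: carrier_vecI)

lemma inp_index:
  assumes "s \<in> carrier_vec db" and "j < 2 * dh + db + 2"
  shows "inp dh s i $ j = (if j < dh then 0 else if j < dh + db then s $ (j - dh)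
    else if j < 2 * dh + db then 0 else if j = 2 * dh + db then of_nat i else 1)"
  using assms unfolding inp_def zvec_def
  by (auto simp del: vec_of_list_Cons simp: vec_of_list_pair_index)

lemma key_out_index:
  assumes "j < 2 * dh + db + 2"
  shows "key_out dh db i $ j = (if j < 2 * dh + db then 0 else if j = 2 * dh + db then -1 else of_nat i)"
  using assms unfolding key_out_def zvec_def
  by (auto simp del: vec_of_list_Cons simp: vec_of_list_pair_index)

lemma val_out_index:
  assumes "s \<in> carrier_vec db" and "j < 2 * dh + db + 2"
  shows "val_out dh s $ j = (if j < dh then 0 else if j < dh + db then s $ (j - dh) else 0)"
  using assms unfolding val_out_def zvec_def
  by (auto simp del: vec_of_list_Cons simp: vec_of_list_pair_index)

definition key_readout :: "nat \<Rightarrow> nat \<Rightarrow> rat mat" where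
  "key_readout dh db = select_mat (2 * dh + db + 2)
     (\<lambda>j. if j = 2 * dh + db then 2 * dh + db + 1 else 2 * dh + db)
     (\<lambda>j. if j = 2 * dh + db then -1 else if j = 2 * dh + db + 1 then 1 else 0)"

definition value_readout :: "nat \<Rightarrow> nat \<Rightarrow> rat mat" where
  "value_readout dh db = select_mat (2 * dh + db + 2) id (\<lambda>j. if dh \<le> j \<and> j < dh + db then 1 else 0)"

lemma key_readout_inp:
  assumes "s \<in> carrier_vec db"
  shows "key_readout dh db *\<^sub>v inp dh s i = key_out dh db i"
proof (rule eq_vecI)
  fix j assume "j < dim_vec (key_out dh db i)"
  then have j: "j < 2 * dh + db + 2" by (simp add: key_out_def zvec_def)
  have "(key_readout dh db *\<^sub>v inp dh s i) $ j =
    (if j = 2 * dh + db then -1 else if j = 2 * dh + db + 1 then 1 else 0) *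
    inp dh s i $ (if j = 2 * dh + db then 2 * dh + db + 1 else 2 * dh + db)"
    unfolding key_readout_def by (rule select_mat_mult_vec_index[OF inp_carrier[OF assms] j]) simp
  then show "(key_readout dh db *\<^sub>v inp dh s i) $ j = key_out dh db i $ j"
    using assms j by (simp add: inp_index key_out_index)
qed (simp add: key_readout_def select_mat_def key_out_def zvec_def)

lemma value_readout_inp:
  assumes "s \<in> carrier_vec db"
  shows "value_readout dh db *\<^sub>v inp dh s i = val_out dh s"
proof (rule eq_vecI)
  fix j assume "j < dim_vec (val_out dh s)"
  then have j: "j < 2 * dh + db + 2" using assms by (simp add: val_out_def zvec_def)
  have "(value_readout dh db *\<^sub>v inp dh s i) $ j =
    (if dh \<le> j \<and> j < dh + db then 1 else 0) * inp dh s i $ j"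
    unfolding value_readout_def
    using select_mat_mult_vec_index[OF inp_carrier[OF assms] j, of id] j by simp
  then show "(value_readout dh db *\<^sub>v inp dh s i) $ j = val_out dh s $ j"
    using assms j by (simp add: inp_index val_out_index)
qed (use assms in \<open>simp add: value_readout_def select_mat_def val_out_def zvec_def\<close>)

theorem lemma1:
  fixes dh db :: nat
  assumes "dh \<ge> 1" and "db \<ge> 1"
  defines "d \<equiv> 2 * dh + db + 2"
  shows "\<exists>Q K V K1 V1 (m::nat) W1 b1 W2 b2.
           Q \<in> carrier_mat d d \<and> K \<in> carrier_mat d d \<and> V \<in> carrier_mat d d \<and>
           K1 \<in> carrier_mat d d \<and> V1 \<in> carrier_mat d d \<and>
           W1 \<in> carrier_mat m d \<and> b1 \<in> carrier_vec m \<and>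
           W2 \<in> carrier_mat d m \<and> b2 \<in> carrier_vec d \<and>
           (\<forall>n::nat. n \<ge> 1 \<longrightarrow> (\<forall>s :: nat \<Rightarrow> rat vec.
              (\<forall>i \<in> {1..n}. s i \<in> carrier_vec db) \<longrightarrow>
              (let Z = enc_layer d Q K V (ffn W1 b1 W2 b2) (map (\<lambda>i. inp dh (s i) i) [1..<n+1])
               in map (\<lambda>z. K1 *\<^sub>v z) Z = map (\<lambda>i. key_out dh db i) [1..<n+1] \<and>
                  map (\<lambda>z. V1 *\<^sub>v z) Z = map (\<lambda>i. val_out dh (s i)) [1..<n+1])))"
proof -
  let ?O = "0\<^sub>m d d" and ?F = "ffn (0\<^sub>m 0 d) (0\<^sub>v 0) (0\<^sub>m d 0) (0\<^sub>v d)"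
  show ?thesis
  proof (rule exI[of _ ?O], rule exI[of _ ?O], rule exI[of _ ?O],
      rule exI[of _ "key_readout dh db"], rule exI[of _ "value_readout dh db"], rule exI[of _ 0],
      rule exI[of _ "0\<^sub>m 0 d"], rule exI[of _ "0\<^sub>v 0"], rule exI[of _ "0\<^sub>m d 0"], rule exI[of _ "0\<^sub>v d"],
      intro conjI allI impI)
    fix n and s :: "nat \<Rightarrow> rat vec"
    assume "\<forall>i \<in> {1..n}. s i \<in> carrier_vec db"
    then have s: "s i \<in> carrier_vec db" if "i \<in> set [1..<n+1]" for i
      using that by auto
    let ?X = "map (\<lambda>i. inp dh (s i) i) [1..<n+1]"
    have "enc_layer d ?O ?O ?O ?F ?X = ?X"
      using s inp_carrier unfolding d_def by (intro enc_layer_zero_values ffn_zero_output) auto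
    then show "let Z = enc_layer d ?O ?O ?O ?F ?X
      in map (\<lambda>z. key_readout dh db *\<^sub>v z) Z = map (key_out dh db) [1..<n+1] \<and>
         map (\<lambda>z. value_readout dh db *\<^sub>v z) Z = map (\<lambda>i. val_out dh (s i)) [1..<n+1]"
      using s by (simp add: key_readout_inp value_readout_inp)
  qed (simp_all add: d_def key_readout_def value_readout_def select_mat_carrier)
qed

end
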